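(* The Petersen graph $P$ satisfies $\mathcal{C}_f(P)=4$.
   Context: All graphs are finite and simple; $G=(V,E)$, $N(v)$ is the open neighborhood of $v$. The Petersen graph is the cubic graph on 10 vertices whose vertices are the 2-element subsets of $\{1,\dots,5\}$, two being adjacent iff they are disjoint. A dominating set is $D\subseteq V$ such that every vertex of $V\setminus D$ has a neighbor in $D$. For an integer $k\geq 1$, a $k$-fair dominating set is a dominating set $D$ such that $|N(v)\cap D|=k$ for every $v\in V\setminus D$. A fair dominating set is a $k$-fair dominating set for some integer $k\geq 1$. A fair coalition consists of two disjoint sets $A_1,A_2\subseteq V$, neither of which is a fair dominating set, such that $A_1\cup A_2$ is a fair dominating set. A fair coalition partition ($fc$-partition) of $G$ is a partition $\Upsilon=\{A_1,\dots,A_k\}$ of $V$ such that every $A_i$ is either a singleton fair dominating set of $G$, or is not a fair dominating set and forms a fair coalition with some other non-fair-dominating set $A_j\in\Upsilon$. The fair coalition number $\mathcal{C}_f(G)$ is the maximum number of parts of an $fc$-partition of $G$. *)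

theory Defs
  imports Main "HOL-Library.Disjoint_Sets"
begin

text \<open>A finite simple graph is given by a vertex set V and a symmetric,
irreflexive adjacency relation E.\<close>

definition nbhd :: "'a set \<Rightarrow> ('a \<Rightarrow> 'a \<Rightarrow> bool) \<Rightarrow> 'a \<Rightarrow> 'a set" where
  "nbhd V E v = {u \<in> V. E v u}"

definition dominating_set :: "'a set \<Rightarrow> ('a \<Rightarrow> 'a \<Rightarrow> bool) \<Rightarrow> 'a set \<Rightarrow> bool" where
  "dominating_set V E D \<longleftrightarrow> D \<subseteq> V \<and> (\<forall>v \<in> V - D. \<exists>u \<in> D. E v u)"

definition k_fair_dominating_set :: "'a set \<Rightarrow> ('a \<Rightarrow> 'a \<Rightarrow> bool) \<Rightarrow> nat \<Rightarrow> 'a set \<Rightarrow> bool" where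
  "k_fair_dominating_set V E k D \<longleftrightarrow>
     dominating_set V E D \<and> (\<forall>v \<in> V - D. card (nbhd V E v \<inter> D) = k)"

definition fair_dominating_set :: "'a set \<Rightarrow> ('a \<Rightarrow> 'a \<Rightarrow> bool) \<Rightarrow> 'a set \<Rightarrow> bool" where
  "fair_dominating_set V E D \<longleftrightarrow> (\<exists>k \<ge> 1. k_fair_dominating_set V E k D)"

definition fair_coalition :: "'a set \<Rightarrow> ('a \<Rightarrow> 'a \<Rightarrow> bool) \<Rightarrow> 'a set \<Rightarrow> 'a set \<Rightarrow> bool" where
  "fair_coalition V E A1 A2 \<longleftrightarrow>
     A1 \<subseteq> V \<and> A2 \<subseteq> V \<and> A1 \<inter> A2 = {} \<and>
     \<not> fair_dominating_set V E A1 \<and> \<not> fair_dominating_set V E A2 \<and>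
     fair_dominating_set V E (A1 \<union> A2)"

definition fc_partition :: "'a set \<Rightarrow> ('a \<Rightarrow> 'a \<Rightarrow> bool) \<Rightarrow> 'a set set \<Rightarrow> bool" where
  "fc_partition V E P \<longleftrightarrow> partition_on V P \<and>
     (\<forall>A \<in> P. (card A = 1 \<and> fair_dominating_set V E A) \<or>
              (\<not> fair_dominating_set V E A \<and> (\<exists>B \<in> P. B \<noteq> A \<and> fair_coalition V E A B)))"

definition fair_coalition_number :: "'a set \<Rightarrow> ('a \<Rightarrow> 'a \<Rightarrow> bool) \<Rightarrow> nat" where
  "fair_coalition_number V E = Max {card P | P. fc_partition V E P}"

definition petersen_V :: "nat set set" where
  "petersen_V = {S. S \<subseteq> {1..5} \<and> card S = 2}"

definition petersen_E :: "nat set \<Rightarrow> nat set \<Rightarrow> bool" where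
  "petersen_E S T \<longleftrightarrow> S \<inter> T = {}"

end

theory Submission
  imports Defs
begin

(*
  Every fair dominating set of the Petersen graph has at least four vertices, so in a fair
  coalition partition no part is a singleton fair dominating set: each part is not fair
  dominating and has a partner whose union with it is. With five or more parts some part has
  at most two vertices, and since S5 acts on the 2-subsets of {1..5} transitively on vertices,
  on edges and on non-edges, this part may be taken to be {12}, {12,34} or {12,13}. A pruned
  exhaustive search for the remaining blocks, run on an adjacency-list copy of the graph,
  excludes all three cases. Four parts are attained by {12}, {13}, {14,23,25,45},
  {15,24,34,35}.
*)

section \<open>Finite sets and partitions\<close>

lemma card_2_doubleton_memE:
  assumes "card S = 2" "a \<in> S"
  obtains b where "b \<noteq> a" "S = {a, b}"
proof -
  obtain p q where pq: "S = {p, q}" "p \<noteq> q"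
    using assms(1) by (auto simp: card_2_iff)
  then have "a = p \<or> a = q"
    using assms(2) by blast
  then show ?thesis
    using that pq by (metis insert_commute)
qed

lemma card_le_2_doubletonE:
  assumes "finite X" "X \<noteq> {}" "card X \<le> 2"
  obtains x y where "X = {x, y}"
proof -
  have "card X = 1 \<or> card X = 2"
    using assms by (simp add: le_Suc_eq numeral_2_eq_2)
  then show ?thesis
    using that by (metis card_1_singletonE card_2_iff insert_absorb2)
qed

lemma bij_betw_extend:
  assumes "finite A" "bij_betw f X Y" "X \<subseteq> A" "Y \<subseteq> A"
  obtains \<sigma> where "bij_betw \<sigma> A A" "\<And>x. x \<in> X \<Longrightarrow> \<sigma> x = f x"
proof -
  have "card (A - X) = card (A - Y)"
    using assms bij_betw_same_card[OF assms(2)] by (simp add: card_Diff_subset finite_subset)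
  then obtain g where g: "bij_betw g (A - X) (A - Y)"
    using finite_same_card_bij assms(1) by blast
  have "bij_betw (\<lambda>x. if x \<in> X then f x else g x) (X \<union> (A - X)) (Y \<union> (A - Y))"
    by (rule bij_betw_disjoint_Un[OF assms(2) g]) auto
  then show ?thesis
    using that assms(3,4) by (simp add: Un_absorb1)
qed

lemma bij_betw_extend_list:
  assumes "finite A" "distinct xs" "distinct ys" "length xs = length ys" "set xs \<subseteq> A" "set ys \<subseteq> A"
  obtains \<sigma> where "bij_betw \<sigma> A A" "map \<sigma> xs = ys"
proof -
  let ?I = "{..<length xs}"
  let ?f = "(!) ys \<circ> inv_into ?I ((!) xs)"
  have xs: "bij_betw ((!) xs) ?I (set xs)"
    using assms(2) by (rule bij_betw_nth) simp_all
  have "bij_betw ?f (set xs) (set ys)"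
    using bij_betw_trans[OF bij_betw_inv_into[OF xs] bij_betw_nth[OF assms(3)]] assms(4) by simp
  then obtain \<sigma> where \<sigma>: "bij_betw \<sigma> A A" "\<And>x. x \<in> set xs \<Longrightarrow> \<sigma> x = ?f x"
    using bij_betw_extend[OF assms(1) _ assms(5,6)] by blast
  have "\<sigma> (xs ! i) = ys ! i" if "i < length xs" for i
    using \<sigma>(2)[OF nth_mem[OF that]] bij_betw_inv_into_left[OF xs] that by simp
  then have "map \<sigma> xs = ys"
    using assms(4) by (simp add: list_eq_iff_nth_eq)
  then show ?thesis
    using that \<sigma>(1) by blast
qed

lemma partition_on_small_part:
  assumes "finite A" "partition_on A P" "P \<noteq> {}"
  obtains X where "X \<in> P" "card X * card P \<le> card A"
proof -
  have "\<exists>X\<in>P. card X * card P \<le> card A"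
  proof (rule ccontr)
    assume "\<not> ?thesis"
    then have big: "\<And>X. X \<in> P \<Longrightarrow> card A < card X * card P"
      by auto
    have "finite X" if "X \<in> P" for X
      using that assms(1) partition_onD1[OF assms(2)] by (metis Union_upper finite_subset)
    then have "card A = (\<Sum>X\<in>P. card X)"
      using card_Union_disjoint[OF partition_onD2[OF assms(2)]] partition_onD1[OF assms(2)] by simp
    then have "card A * card P = (\<Sum>X\<in>P. card X * card P)"
      by (simp add: sum_distrib_right)
    also have "(\<Sum>X\<in>P. card A) < \<dots>"
      using sum_strict_mono[OF finite_elements[OF assms(1,2)] assms(3) big] .
    finally show False
      by simp
  qed
  then show ?thesis
    using that by blast
qed

lemma partition_on_card_le:
  assumes "finite A" "partition_on A P"
  shows "card P \<le> card A"
proof (cases "P = {}")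
  case False
  then obtain X where X: "X \<in> P" "card X * card P \<le> card A"
    using partition_on_small_part[OF assms] by blast
  have "X \<noteq> {}" "finite X"
    using X(1) assms partition_onD1 partition_onD3 by (blast, metis Union_upper finite_subset)
  then have "1 \<le> card X"
    by (simp add: Suc_le_eq card_gt_0_iff)
  then show ?thesis
    using X(2) by (metis dual_order.trans mult_1 mult_le_mono1)
qed simp

section \<open>Fair coalition partitions and graph isomorphisms\<close>

lemma fc_partition_partner:
  assumes "fc_partition V E P" "A \<in> P" "\<And>D. fair_dominating_set V E D \<Longrightarrow> card D \<noteq> 1"
  shows "\<not> fair_dominating_set V E A \<and> (\<exists>B\<in>P. fair_dominating_set V E (A \<union> B))"
proof -
  have "(card A = 1 \<and> fair_dominating_set V E A) \<or>
      (\<not> fair_dominating_set V E A \<and> (\<exists>B\<in>P. B \<noteq> A \<and> fair_coalition V E A B))"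
    using assms(1,2) by (simp add: fc_partition_def)
  then show ?thesis
    using assms(3) unfolding fair_coalition_def by blast
qed

lemma fair_coalition_number_eqI:
  assumes "\<And>P. fc_partition V E P \<Longrightarrow> card P \<le> n" "fc_partition V E P" "card P = n"
  shows "fair_coalition_number V E = n"
proof -
  have "{card P | P. fc_partition V E P} \<subseteq> {..n}"
    using assms(1) by auto
  then show ?thesis
    unfolding fair_coalition_number_def
    using assms(2,3) finite_subset[OF _ finite_atMost] by (intro Max_eqI) auto
qed

definition graph_iso ::
    "'a set \<Rightarrow> ('a \<Rightarrow> 'a \<Rightarrow> bool) \<Rightarrow> 'b set \<Rightarrow> ('b \<Rightarrow> 'b \<Rightarrow> bool) \<Rightarrow> ('a \<Rightarrow> 'b) \<Rightarrow> bool" where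
  "graph_iso V E V' E' h \<longleftrightarrow> bij_betw h V V' \<and> (\<forall>u\<in>V. \<forall>v\<in>V. E' (h u) (h v) \<longleftrightarrow> E u v)"

lemma graph_iso_inv:
  assumes "graph_iso V E V' E' h"
  shows "graph_iso V' E' V E (inv_into V h)"
proof -
  have bij: "bij_betw h V V'" and adj: "\<forall>u\<in>V. \<forall>v\<in>V. E' (h u) (h v) \<longleftrightarrow> E u v"
    using assms by (auto simp: graph_iso_def)
  have "E (inv_into V h u) (inv_into V h v) \<longleftrightarrow> E' u v" if "u \<in> V'" "v \<in> V'" for u v
  proof -
    have "inv_into V h u \<in> V" "inv_into V h v \<in> V"
      using that bij_betwE[OF bij_betw_inv_into[OF bij]] by blast+
    then show ?thesis
      using adj bij_betw_inv_into_right[OF bij] that by metis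
  qed
  then show ?thesis
    using bij_betw_inv_into[OF bij] by (simp add: graph_iso_def)
qed

lemma graph_iso_comp:
  assumes "graph_iso V E V' E' h" "graph_iso V' E' V'' E'' g"
  shows "graph_iso V E V'' E'' (g \<circ> h)"
proof -
  have "bij_betw h V V'" "bij_betw g V' V''"
    using assms by (auto simp: graph_iso_def)
  moreover have "h u \<in> V'" if "u \<in> V" for u
    using that bij_betwE[OF \<open>bij_betw h V V'\<close>] by blast
  ultimately show ?thesis
    using assms by (auto simp: graph_iso_def intro: bij_betw_trans)
qed

context
  fixes V E V' E' h
  assumes iso: "graph_iso V E V' E' h"
begin

lemma graph_iso_nbhd:
  assumes "v \<in> V"
  shows "nbhd V' E' (h v) = h ` nbhd V E v"
  using iso assms unfolding graph_iso_def nbhd_def bij_betw_def by auto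

lemma graph_iso_k_fair_dominating_set:
  assumes "D \<subseteq> V"
  shows "k_fair_dominating_set V' E' k (h ` D) \<longleftrightarrow> k_fair_dominating_set V E k D"
proof -
  have inj: "inj_on h V" and img: "h ` V = V'" and adj: "\<forall>u\<in>V. \<forall>v\<in>V. E' (h u) (h v) \<longleftrightarrow> E u v"
    using iso by (auto simp: graph_iso_def bij_betw_def)
  have outside: "V' - h ` D = h ` (V - D)"
    using inj_on_image_set_diff[OF inj _ assms] img by simp
  have count: "card (nbhd V' E' (h v) \<inter> h ` D) = card (nbhd V E v \<inter> D)" if "v \<in> V" for v
  proof -
    have "nbhd V E v \<subseteq> V" by (auto simp: nbhd_def)
    then have "nbhd V' E' (h v) \<inter> h ` D = h ` (nbhd V E v \<inter> D)"
      using graph_iso_nbhd[OF that] inj_on_image_Int[OF inj _ assms] by simp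
    moreover have "inj_on h (nbhd V E v \<inter> D)"
      using inj_on_subset[OF inj] assms by blast
    ultimately show ?thesis by (simp add: card_image)
  qed
  have "(\<forall>w\<in>V' - h ` D. \<exists>u\<in>h ` D. E' w u) \<longleftrightarrow> (\<forall>v\<in>V - D. \<exists>u\<in>D. E' (h v) (h u))"
    unfolding outside by simp
  also have "\<dots> \<longleftrightarrow> (\<forall>v\<in>V - D. \<exists>u\<in>D. E v u)"
    using adj assms by blast
  moreover have "(\<forall>w\<in>V' - h ` D. card (nbhd V' E' w \<inter> h ` D) = k) \<longleftrightarrow>
      (\<forall>v\<in>V - D. card (nbhd V' E' (h v) \<inter> h ` D) = k)"
    unfolding outside by simp
  moreover have "\<dots> \<longleftrightarrow> (\<forall>v\<in>V - D. card (nbhd V E v \<inter> D) = k)"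
    using count by simp
  moreover have "h ` D \<subseteq> V'"
    using assms img by blast
  ultimately show ?thesis
    using assms unfolding k_fair_dominating_set_def dominating_set_def by blast
qed

lemma graph_iso_fair_dominating_set:
  "D \<subseteq> V \<Longrightarrow> fair_dominating_set V' E' (h ` D) \<longleftrightarrow> fair_dominating_set V E D"
  unfolding fair_dominating_set_def using graph_iso_k_fair_dominating_set by blast

lemma graph_iso_fc_partition:
  assumes P: "fc_partition V E P"
  shows "fc_partition V' E' ((`) h ` P)" and "card ((`) h ` P) = card P"
proof -
  have inj: "inj_on h V" and img: "h ` V = V'"
    using iso by (auto simp: graph_iso_def bij_betw_def)
  have part: "partition_on V P"
    using P by (simp add: fc_partition_def)
  then have sub: "A \<subseteq> V" if "A \<in> P" for A
    using that by (auto simp: partition_on_def)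
  have injP: "inj_on ((`) h) P"
    by (rule inj_on_image) (use inj_on_subset[OF inj] partition_onD1[OF part] in blast)
  then show "card ((`) h ` P) = card P"
    by (rule card_image)
  have "partition_on V' ((`) h ` P)"
  proof -
    have "{} \<notin> (`) h ` P"
      using partition_onD3[OF part] by auto
    then show ?thesis
      using partition_on_inj_image[OF part inj] img by simp
  qed
  moreover have "(card A' = 1 \<and> fair_dominating_set V' E' A') \<or>
      (\<not> fair_dominating_set V' E' A' \<and> (\<exists>B'\<in>(`) h ` P. B' \<noteq> A' \<and> fair_coalition V' E' A' B'))"
    if A': "A' \<in> (`) h ` P" for A'
  proof -
    obtain A where A: "A \<in> P" "A' = h ` A"
      using A' by blast
    have fd: "fair_dominating_set V' E' (h ` X) \<longleftrightarrow> fair_dominating_set V E X" if "X \<subseteq> V" for X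
      using graph_iso_fair_dominating_set[OF that] .
    have fdA: "fair_dominating_set V' E' A' \<longleftrightarrow> fair_dominating_set V E A"
      using A fd[OF sub[OF A(1)]] by simp
    have "(card A = 1 \<and> fair_dominating_set V E A) \<or>
        (\<not> fair_dominating_set V E A \<and> (\<exists>B\<in>P. B \<noteq> A \<and> fair_coalition V E A B))"
      using P A(1) by (simp add: fc_partition_def)
    then show ?thesis
    proof
      assume "card A = 1 \<and> fair_dominating_set V E A"
      then show ?thesis
        using A inj_on_subset[OF inj sub] fdA by (simp add: card_image)
    next
      assume "\<not> fair_dominating_set V E A \<and> (\<exists>B\<in>P. B \<noteq> A \<and> fair_coalition V E A B)"
      then obtain B where B: "B \<in> P" "B \<noteq> A" "fair_coalition V E A B" and nfd: "\<not> fair_dominating_set V E A"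
        by blast
      have "fair_coalition V' E' A' (h ` B)"
        using B A fd[of A] fd[of B] fd[of "A \<union> B"] sub inj_on_image_Int[OF inj, of A B] img
        unfolding fair_coalition_def by (auto simp: image_Un)
      moreover have "h ` B \<noteq> A'"
        using A B injP by (auto dest: inj_onD)
      ultimately show ?thesis
        using nfd fdA B(1) by blast
    qed
  qed
  ultimately show "fc_partition V' E' ((`) h ` P)"
    by (simp add: fc_partition_def)
qed

end

section \<open>Graphs given by adjacency lists\<close>

definition adj_list_V :: "nat list list \<Rightarrow> nat set" where
  "adj_list_V G = {..<length G}"

definition adj_list_E :: "nat list list \<Rightarrow> nat \<Rightarrow> nat \<Rightarrow> bool" where
  "adj_list_E G u v \<longleftrightarrow> u < length G \<and> v \<in> set (G ! u)"

fun equal_positive :: "nat list \<Rightarrow> bool" where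
  "equal_positive [] = True"
| "equal_positive (k # ks) \<longleftrightarrow> 1 \<le> k \<and> (\<forall>x\<in>set ks. x = k)"

lemma equal_positive_iff: "equal_positive ks \<longleftrightarrow> (\<exists>k\<ge>1. \<forall>x\<in>set ks. x = k)"
  by (cases ks) auto

definition fair_dominating_list :: "nat list list \<Rightarrow> nat list \<Rightarrow> bool" where
  "fair_dominating_list G D \<longleftrightarrow>
     equal_positive [length (filter (\<lambda>u. u \<in> set D) N). (v, N) \<leftarrow> zip [0..<length G] G, v \<notin> set D]"

lemma fair_dominating_list_iff:
  assumes "\<forall>N\<in>set G. distinct N" "set D \<subseteq> adj_list_V G"
  shows "fair_dominating_list G D \<longleftrightarrow> fair_dominating_set (adj_list_V G) (adj_list_E G) (set D)"
proof -
  let ?V = "adj_list_V G" and ?E = "adj_list_E G"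
  let ?count = "\<lambda>v. length (filter (\<lambda>u. u \<in> set D) (G ! v))"
  have count: "card (nbhd ?V ?E v \<inter> set D) = ?count v" if "v \<in> ?V" for v
  proof -
    have "nbhd ?V ?E v \<inter> set D = {u. u \<in> set D} \<inter> set (G ! v)"
      using that assms(2) by (auto simp: nbhd_def adj_list_E_def adj_list_V_def)
    then show ?thesis
      using that assms(1) by (simp add: distinct_length_filter adj_list_V_def)
  qed
  have "set [length (filter (\<lambda>u. u \<in> set D) N). (v, N) \<leftarrow> zip [0..<length G] G, v \<notin> set D] =
      ?count ` (?V - set D)"
    by (auto simp: set_zip adj_list_V_def image_iff)
  then have "fair_dominating_list G D \<longleftrightarrow> (\<exists>k\<ge>1. \<forall>v\<in>?V - set D. ?count v = k)"
    by (simp add: fair_dominating_list_def equal_positive_iff)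
  also have "\<dots> \<longleftrightarrow> (\<exists>k\<ge>1. k_fair_dominating_set ?V ?E k (set D))"
  proof -
    have "\<exists>u\<in>set D. ?E v u" if "v \<in> ?V" "1 \<le> card (nbhd ?V ?E v \<inter> set D)" for v
    proof -
      have "nbhd ?V ?E v \<inter> set D \<noteq> {}"
        using that(2) by auto
      then show ?thesis
        by (auto simp: nbhd_def)
    qed
    then show ?thesis
      using count assms(2) unfolding k_fair_dominating_set_def dominating_set_def by auto
  qed
  finally show ?thesis
    by (simp add: fair_dominating_set_def)
qed

section \<open>Excluding large fair coalition partitions by search\<close>

(* Enumerates subsequences through an accumulator instead of building subseqs xs: code_simp
   then never normalises under a binder and never materialises the exponential list. *)
fun exists_subseq :: "('a list \<Rightarrow> bool) \<Rightarrow> 'a list \<Rightarrow> 'a list \<Rightarrow> bool" where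
  "exists_subseq P [] acc = P acc"
| "exists_subseq P (x # xs) acc \<longleftrightarrow> exists_subseq P xs (x # acc) \<or> exists_subseq P xs acc"

lemma exists_subseq_iff: "exists_subseq P xs acc \<longleftrightarrow> (\<exists>ys\<in>set (subseqs xs). P (rev ys @ acc))"
proof (induction xs arbitrary: acc)
  case (Cons x xs)
  have "(\<exists>ys\<in>set (subseqs (x # xs)). P (rev ys @ acc)) \<longleftrightarrow>
      (\<exists>ys\<in>set (subseqs xs). P (rev ys @ x # acc)) \<or> (\<exists>ys\<in>set (subseqs xs). P (rev ys @ acc))"
    by (simp add: Let_def bex_Un)
  then show ?case
    using Cons.IH by simp
qed simp

lemma exists_subseqI:
  assumes "B \<subseteq> set xs" "\<And>W. set W = B \<union> set acc \<Longrightarrow> P W"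
  shows "exists_subseq P xs acc"
proof -
  obtain ys where "ys \<in> set (subseqs xs)" "set ys = B"
    using subset_subseqs[OF assms(1)] by blast
  then show ?thesis
    using assms(2)[of "rev ys @ acc"] by (auto simp: exists_subseq_iff)
qed

definition large_fair_dominating_list :: "nat list list \<Rightarrow> nat \<Rightarrow> nat list \<Rightarrow> bool" where
  "large_fair_dominating_list G d D \<longleftrightarrow> (if length D < d then False else fair_dominating_list G D)"

lemma large_fair_dominating_list_iff:
  assumes "\<forall>N\<in>set G. distinct N" "set D \<subseteq> adj_list_V G"
    and "\<And>D. fair_dominating_set (adj_list_V G) (adj_list_E G) D \<Longrightarrow> d \<le> card D"
  shows "large_fair_dominating_list G d D \<longleftrightarrow> fair_dominating_set (adj_list_V G) (adj_list_E G) (set D)"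
  using assms fair_dominating_list_iff[OF assms(1,2)] card_length[of D]
  unfolding large_fair_dominating_list_def by (metis le_trans not_le)

(*
  Search state: K holds the blocks placed so far, U the blocks of K without a partner in K,
  and F the vertices not yet covered. The partner of the first block in U must be a subset of
  F; if U is empty, a new block is formed around the first free vertex. Fuel runs out with
  result True, so a result False certifies that no partition into at least m parts, none of
  them fair dominating and each with a partner, extends the state.
*)
definition partner_step ::
    "nat list list \<Rightarrow> nat \<Rightarrow> nat \<Rightarrow> (nat list list \<Rightarrow> nat list list \<Rightarrow> nat list \<Rightarrow> bool) \<Rightarrow>
     nat list list \<Rightarrow> nat list \<Rightarrow> nat list list \<Rightarrow> nat list \<Rightarrow> nat list \<Rightarrow> bool" where
  "partner_step G d m continue K Z U F W =
    (let F' = [v\<leftarrow>F. v \<notin> set W] in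
     if Suc (length K + length F') < m then False
     else if large_fair_dominating_list G d (Z @ W) \<and> \<not> large_fair_dominating_list G d W
     then continue (W # K) [V\<leftarrow>U. \<not> large_fair_dominating_list G d (W @ V)] F'
     else False)"

definition new_block_step ::
    "nat list list \<Rightarrow> nat \<Rightarrow> nat \<Rightarrow> (nat list list \<Rightarrow> nat list list \<Rightarrow> nat list \<Rightarrow> bool) \<Rightarrow>
     nat list list \<Rightarrow> nat list \<Rightarrow> nat list \<Rightarrow> bool" where
  "new_block_step G d m continue K F W =
    (let F' = [v\<leftarrow>F. v \<notin> set W] in
     if Suc (length K + length F') < m then False
     else if large_fair_dominating_list G d W then False
     else continue (W # K) (if \<exists>V\<in>set K. large_fair_dominating_list G d (W @ V) then [] else [W]) F')"

primrec coalition_search ::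
    "nat list list \<Rightarrow> nat \<Rightarrow> nat \<Rightarrow> nat \<Rightarrow> nat list list \<Rightarrow> nat list list \<Rightarrow> nat list \<Rightarrow> bool" where
  "coalition_search G d m 0 K U F = True"
| "coalition_search G d m (Suc n) K U F =
    (case U of
       Z # U' \<Rightarrow> exists_subseq (partner_step G d m (coalition_search G d m n) K Z U' F) F []
     | [] \<Rightarrow> (case F of
          [] \<Rightarrow> True
        | w # F' \<Rightarrow> exists_subseq (new_block_step G d m (coalition_search G d m n) K F') F' [w]))"

definition search_inv :: "nat list list \<Rightarrow> nat set set \<Rightarrow> nat list list \<Rightarrow> nat list list \<Rightarrow> nat list \<Rightarrow> bool" where
  "search_inv G Q K U F \<longleftrightarrow> set ` set K \<subseteq> Q \<and>
     (\<forall>Z\<in>set U. set Z \<in> Q \<and>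
        (\<forall>V\<in>set K. \<not> fair_dominating_set (adj_list_V G) (adj_list_E G) (set Z \<union> set V))) \<and>
     \<Union>(Q - set ` set K) = set F"

context
  fixes G :: "nat list list" and d m :: nat and Q :: "nat set set"
  assumes distinct_adj: "\<forall>N\<in>set G. distinct N"
    and fair_dominating_card: "\<And>D. fair_dominating_set (adj_list_V G) (adj_list_E G) D \<Longrightarrow> d \<le> card D"
    and Q_partition: "partition_on (adj_list_V G) Q"
    and Q_card: "m \<le> card Q"
    and Q_parts: "\<And>A. A \<in> Q \<Longrightarrow> \<not> fair_dominating_set (adj_list_V G) (adj_list_E G) A \<and>
      (\<exists>B\<in>Q. fair_dominating_set (adj_list_V G) (adj_list_E G) (A \<union> B))"
begin

private abbreviation "FD \<equiv> fair_dominating_set (adj_list_V G) (adj_list_E G)"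

private lemma large_fair_dominating_list_part:
  "set D \<subseteq> \<Union>Q \<Longrightarrow> large_fair_dominating_list G d D \<longleftrightarrow> FD (set D)"
  using large_fair_dominating_list_iff[OF distinct_adj _ fair_dominating_card] partition_onD1[OF Q_partition]
  by blast

lemma search_inv_card:
  assumes "search_inv G Q K U F"
  shows "card Q \<le> length K + length F"
proof -
  let ?R = "Q - set ` set K"
  have "partition_on (\<Union>?R) ?R"
    using Q_partition by (auto simp: partition_on_def intro: pairwise_subset)
  then have "card ?R \<le> card (set F)"
    using partition_on_card_le[of "set F" ?R] assms by (simp add: search_inv_def)
  moreover have "card (Q \<inter> set ` set K) \<le> length K"
    using card_mono[of "set ` set K" "Q \<inter> set ` set K"] card_image_le[of "set K" set] card_length[of K]
    by fastforce
  moreover have "card Q \<le> card (Q \<inter> set ` set K) + card ?R"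
    using card_Un_le[of "Q \<inter> set ` set K" ?R] by (metis Int_Diff_Un)
  ultimately show ?thesis
    using card_length[of F] by linarith
qed

lemma search_inv_add_block:
  assumes inv: "search_inv G Q K U F" and B: "B \<in> Q" "B \<notin> set ` set K" "set W = B"
    and U': "\<forall>Z\<in>set U'. set Z \<in> Q \<and> (\<forall>V\<in>set (W # K). \<not> FD (set Z \<union> set V))"
  shows "search_inv G Q (W # K) U' [v\<leftarrow>F. v \<notin> set W]"
proof -
  have "\<Union>(Q - set ` set (W # K)) = \<Union>(Q - set ` set K) - B"
    using B partition_onD2[OF Q_partition] by (auto simp: disjoint_def)
  then show ?thesis
    using inv U' B by (auto simp: search_inv_def)
qed

lemma search_inv_init:
  assumes "set r \<in> Q" "set F = adj_list_V G - set r"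
  shows "search_inv G Q [r] [r] F"
proof -
  have "\<Union>(Q - {set r}) = adj_list_V G - set r"
    using assms(1) partition_onD1[OF Q_partition] partition_onD2[OF Q_partition]
    by (auto simp: disjoint_def)
  then show ?thesis
    using assms Q_parts by (simp add: search_inv_def)
qed

lemma search_inv_bound: "search_inv G Q (W # K) U F \<Longrightarrow> m \<le> Suc (length K + length F)"
  using search_inv_card Q_card by fastforce

lemma partner_step_sound:
  assumes IH: "\<And>K U F. search_inv G Q K U F \<Longrightarrow> continue K U F"
    and inv: "search_inv G Q K (Z # U) F"
  shows "exists_subseq (partner_step G d m continue K Z U F) F []"
proof -
  have Z: "set Z \<in> Q" "\<forall>V\<in>set K. \<not> FD (set Z \<union> set V)"
    using inv by (auto simp: search_inv_def)
  obtain B where B: "B \<in> Q" "FD (set Z \<union> B)"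
    using Q_parts[OF Z(1)] by blast
  have "B \<notin> set ` set K"
    using Z(2) B(2) by auto
  then have "B \<subseteq> \<Union>(Q - set ` set K)"
    using B(1) by blast
  then have BF: "B \<subseteq> set F"
    using inv by (simp add: search_inv_def)
  have "partner_step G d m continue K Z U F W" if W: "set W = B" for W
  proof -
    let ?U = "[V\<leftarrow>U. \<not> large_fair_dominating_list G d (W @ V)]"
    have "set Z' \<in> Q \<and> (\<forall>V\<in>set (W # K). \<not> FD (set Z' \<union> set V))" if "Z' \<in> set ?U" for Z'
    proof -
      have Z': "set Z' \<in> Q" "\<forall>V\<in>set K. \<not> FD (set Z' \<union> set V)"
        using that inv by (auto simp: search_inv_def)
      have "set (W @ Z') \<subseteq> \<Union>Q"
        using W B(1) Z'(1) by auto
      then have "\<not> FD (set Z' \<union> set W)"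
        using that large_fair_dominating_list_part[of "W @ Z'"] by (auto simp: Un_commute)
      then show ?thesis
        using Z' by simp
    qed
    then have inv': "search_inv G Q (W # K) ?U [v\<leftarrow>F. v \<notin> set W]"
      using search_inv_add_block[OF inv B(1) \<open>B \<notin> set ` set K\<close> W] by blast
    have "large_fair_dominating_list G d (Z @ W)" "\<not> large_fair_dominating_list G d W"
      using large_fair_dominating_list_part[of "Z @ W"] large_fair_dominating_list_part[of W]
        Z(1) B W Q_parts by auto
    then show ?thesis
      using search_inv_bound[OF inv'] IH[OF inv'] by (simp add: partner_step_def Let_def)
  qed
  then show ?thesis
    using exists_subseqI[OF BF] by simp
qed

lemma new_block_step_sound:
  assumes IH: "\<And>K U F. search_inv G Q K U F \<Longrightarrow> continue K U F"
    and inv: "search_inv G Q K [] (w # F)"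
  shows "exists_subseq (new_block_step G d m continue K F) F [w]"
proof -
  have "w \<in> \<Union>(Q - set ` set K)"
    using inv by (simp add: search_inv_def)
  then obtain B where B: "B \<in> Q" "B \<notin> set ` set K" "w \<in> B"
    by blast
  have BF: "B - {w} \<subseteq> set F"
    using inv B by (auto simp: search_inv_def)
  have "new_block_step G d m continue K F W" if W: "set W = B - {w} \<union> set [w]" for W
  proof -
    have WB: "set W = B"
      using W B(3) by auto
    let ?U = "if \<exists>V\<in>set K. large_fair_dominating_list G d (W @ V) then [] else [W]"
    have "large_fair_dominating_list G d (W @ V) \<longleftrightarrow> FD (set W \<union> set V)" if "V \<in> set K" for V
    proof -
      have "set V \<subseteq> \<Union>Q" "set W \<subseteq> \<Union>Q"
        using that inv WB B(1) by (auto simp: search_inv_def)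
      then show ?thesis
        using large_fair_dominating_list_part[of "W @ V"] by simp
    qed
    then have "\<forall>Z\<in>set ?U. set Z \<in> Q \<and> (\<forall>V\<in>set (W # K). \<not> FD (set Z \<union> set V))"
      using WB B(1) Q_parts by auto
    then have "search_inv G Q (W # K) ?U [v\<leftarrow>w # F. v \<notin> set W]"
      using search_inv_add_block[OF inv B(1,2) WB] by blast
    moreover have "[v\<leftarrow>w # F. v \<notin> set W] = [v\<leftarrow>F. v \<notin> set W]"
      using WB B(3) by simp
    ultimately have inv': "search_inv G Q (W # K) ?U [v\<leftarrow>F. v \<notin> set W]"
      by simp
    have "\<not> large_fair_dominating_list G d W"
      using large_fair_dominating_list_part[of W] WB B(1) Q_parts by auto
    then show ?thesis
      using search_inv_bound[OF inv'] IH[OF inv'] by (simp add: new_block_step_def Let_def)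
  qed
  then show ?thesis
    using exists_subseqI[OF BF] by simp
qed

lemma coalition_search_sound:
  "search_inv G Q K U F \<Longrightarrow> coalition_search G d m n K U F"
proof (induction n arbitrary: K U F)
  case (Suc n)
  show ?case
  proof (cases U)
    case (Cons Z U')
    then show ?thesis
      using partner_step_sound[OF Suc.IH] Suc.prems by simp
  next
    case Nil
    then show ?thesis
      using new_block_step_sound[OF Suc.IH] Suc.prems by (cases F) simp_all
  qed
qed simp

end

section \<open>The Petersen graph\<close>

definition petersen_adj :: "nat list list" where
  "petersen_adj = [[7,8,9], [5,6,9], [4,6,8], [4,5,7], [2,3,9], [1,3,8], [1,2,7], [0,3,6], [0,2,5], [0,1,4]]"

definition petersen_labels :: "nat set list" where
  "petersen_labels = [{1,2}, {1,3}, {1,4}, {1,5}, {2,3}, {2,4}, {2,5}, {3,4}, {3,5}, {4,5}]"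

abbreviation "petersen_num_V \<equiv> adj_list_V petersen_adj"
abbreviation "petersen_num_E \<equiv> adj_list_E petersen_adj"

lemma petersen_num_V_eq: "petersen_num_V = {0, 1, 2, 3, 4, 5, 6, 7, 8, 9}"
proof -
  have "{..<10::nat} = {0, 1, 2, 3, 4, 5, 6, 7, 8, 9}"
    by (auto simp: numeral_eq_Suc less_Suc_eq)
  moreover have "length petersen_adj = 10"
    by (simp add: petersen_adj_def)
  ultimately show ?thesis
    by (simp add: adj_list_V_def)
qed

lemma card_petersen_V: "card petersen_V = 10"
  unfolding petersen_V_def by (simp add: n_subsets choose_two)

lemma finite_petersen_V: "finite petersen_V"
  using card_petersen_V by (intro card_ge_0_finite) simp

lemma distinct_petersen_labels: "distinct petersen_labels"
  by (simp add: petersen_labels_def doubleton_eq_iff)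

lemma petersen_V_eq: "petersen_V = set petersen_labels"
proof -
  have "set petersen_labels \<subseteq> petersen_V"
    by (auto simp: petersen_labels_def petersen_V_def)
  moreover have "card (set petersen_labels) = card petersen_V"
    using distinct_card[OF distinct_petersen_labels] card_petersen_V by (simp add: petersen_labels_def)
  ultimately show ?thesis
    using card_subset_eq[OF finite_petersen_V] by blast
qed

lemma graph_iso_petersen_labels:
  "graph_iso petersen_num_V petersen_num_E petersen_V petersen_E ((!) petersen_labels)"
proof -
  have V: "petersen_num_V = {..<length petersen_labels}"
    by (simp add: adj_list_V_def petersen_adj_def petersen_labels_def)
  have "bij_betw ((!) petersen_labels) petersen_num_V petersen_V"
    unfolding V petersen_V_eq by (rule bij_betw_nth[OF distinct_petersen_labels]) simp_all
  moreover have "\<forall>u\<in>set [0,1,2,3,4,5,6,7,8,9]. \<forall>v\<in>set [0,1,2,3,4,5,6,7,8,9].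
      petersen_E (petersen_labels ! u) (petersen_labels ! v) \<longleftrightarrow> v \<in> set (petersen_adj ! u)"
    by (simp add: petersen_E_def petersen_labels_def petersen_adj_def)
  moreover have "petersen_num_V = set [0,1,2,3,4,5,6,7,8,9]" "length petersen_adj = 10"
    by (auto simp: adj_list_V_def petersen_adj_def)
  ultimately show ?thesis
    unfolding graph_iso_def by (simp add: adj_list_E_def)
qed

lemma distinct_petersen_adj: "\<forall>N\<in>set petersen_adj. distinct N"
  by (simp add: petersen_adj_def)

lemma petersen_fair_dominating_list_iff:
  "set D \<subseteq> petersen_num_V \<Longrightarrow>
    fair_dominating_list petersen_adj D \<longleftrightarrow> fair_dominating_set petersen_num_V petersen_num_E (set D)"
  by (rule fair_dominating_list_iff[OF distinct_petersen_adj])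

lemma petersen_fair_dominating_card:
  assumes "fair_dominating_set petersen_num_V petersen_num_E D"
  shows "4 \<le> card D"
proof (rule ccontr)
  assume small: "\<not> 4 \<le> card D"
  have DV: "D \<subseteq> petersen_num_V"
    using assms by (auto simp: fair_dominating_set_def k_fair_dominating_set_def dominating_set_def)
  moreover have "petersen_num_V = set [0..<10]"
    by (auto simp: adj_list_V_def petersen_adj_def)
  ultimately have "D \<in> set ` set (subseqs [0..<10])"
    by (intro subset_subseqs) simp
  then obtain ys where ys: "ys \<in> set (subseqs [0..<10])" "set ys = D"
    by blast
  then have "length (rev ys) < 4"
    using small distinct_card[OF subseqs_distinctD[OF ys(1)]] by simp
  moreover have "set (rev ys) \<subseteq> petersen_num_V"
    using ys(2) DV by simp
  ultimately have "exists_subseq (\<lambda>W. length W < 4 \<and> fair_dominating_list petersen_adj W) [0..<10] []"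
    using ys assms petersen_fair_dominating_list_iff[of "rev ys"] by (auto simp: exists_subseq_iff)
  moreover have "\<not> exists_subseq (\<lambda>W. length W < 4 \<and> fair_dominating_list petersen_adj W) [0..<10] []"
    by code_simp
  ultimately show False
    by contradiction
qed

lemma petersen_num_fc_partition: "fc_partition petersen_num_V petersen_num_E {{0}, {1}, {2,4,6,9}, {3,5,7,8}}"
proof -
  let ?FD = "fair_dominating_set petersen_num_V petersen_num_E"
  have FD: "?FD (set D) \<longleftrightarrow> fair_dominating_list petersen_adj D" if "set D \<subseteq> {0, 1, 2, 3, 4, 5, 6, 7, 8, 9}" for D
    using petersen_fair_dominating_list_iff that unfolding petersen_num_V_eq by simp
  have "\<not> fair_dominating_list petersen_adj [0]" "\<not> fair_dominating_list petersen_adj [1]"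
    "\<not> fair_dominating_list petersen_adj [2,4,6,9]" "\<not> fair_dominating_list petersen_adj [3,5,7,8]"
    "fair_dominating_list petersen_adj [0,3,5,7,8]" "fair_dominating_list petersen_adj [1,2,4,6,9]"
    by code_simp+
  then have "\<not> ?FD {0}" "\<not> ?FD {1}" "\<not> ?FD {2,4,6,9}" "\<not> ?FD {3,5,7,8}"
      "?FD {0,3,5,7,8}" "?FD {1,2,4,6,9}"
    using FD[of "[0]"] FD[of "[1]"] FD[of "[2,4,6,9]"] FD[of "[3,5,7,8]"] FD[of "[0,3,5,7,8]"] FD[of "[1,2,4,6,9]"]
    by simp_all
  then show ?thesis
    unfolding fc_partition_def fair_coalition_def
    by (auto simp: partition_on_def disjoint_def petersen_num_V_eq insert_commute)
qed

lemma petersen_automorphism: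
  assumes "bij_betw \<sigma> {1..5} {1..5}"
  shows "graph_iso petersen_V petersen_E petersen_V petersen_E ((`) \<sigma>)"
proof -
  have inj: "inj_on \<sigma> {1..5}" and img: "\<sigma> ` {1..5} = {1..5}"
    using assms by (auto simp: bij_betw_def)
  have sub: "S \<subseteq> {1..5}" if "S \<in> petersen_V" for S
    using that by (simp add: petersen_V_def)
  have maps: "(`) \<sigma> ` petersen_V \<subseteq> petersen_V"
    using img inj_on_subset[OF inj] sub by (auto simp: petersen_V_def card_image)
  have injV: "inj_on ((`) \<sigma>) petersen_V"
    using inj_on_image_eq_iff[OF inj] sub by (auto intro: inj_onI)
  have "bij_betw ((`) \<sigma>) petersen_V petersen_V"
    using endo_inj_surj[OF finite_petersen_V maps injV] injV by (simp add: bij_betw_def)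
  moreover have "\<sigma> ` S \<inter> \<sigma> ` T = {} \<longleftrightarrow> S \<inter> T = {}" if "S \<in> petersen_V" "T \<in> petersen_V" for S T
    using inj_on_image_Int[OF inj sub[OF that(1)] sub[OF that(2)]] by (metis image_is_empty)
  ultimately show ?thesis
    by (simp add: graph_iso_def petersen_E_def)
qed

lemma petersen_canonical_pair:
  assumes x: "x \<in> petersen_V" and y: "y \<in> petersen_V"
  obtains \<sigma> :: "nat \<Rightarrow> nat" where "bij_betw \<sigma> {1..5} {1..5}" "\<sigma> ` x = {1,2}" "\<sigma> ` y \<in> {{1,2}, {1,3}, {3,4}}"
proof -
  have cx: "card x = 2" "x \<subseteq> {1..5}" and cy: "card y = 2" "y \<subseteq> {1..5}"
    using x y by (auto simp: petersen_V_def)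
  have relabel: "\<exists>\<sigma>. bij_betw \<sigma> {1..5} {1..5} \<and> map \<sigma> xs = ys"
    if "distinct xs" "set xs \<subseteq> x \<union> y" "distinct ys" "length xs = length ys" "set ys \<subseteq> {1..5}"
    for xs ys :: "nat list"
  proof -
    have "set xs \<subseteq> {1..5}"
      using that(2) cx(2) cy(2) by blast
    then show ?thesis
      using bij_betw_extend_list[OF finite_atLeastAtMost that(1,3,4) _ that(5)] by metis
  qed
  consider "x \<inter> y = {}" | a where "a \<in> x \<inter> y" "x \<noteq> y" | "x = y"
    by blast
  then show ?thesis
  proof cases
    case 1
    obtain a b where ab: "x = {a, b}" "a \<noteq> b"
      using cx(1) by (auto simp: card_2_iff)
    obtain c e where ce: "y = {c, e}" "c \<noteq> e"
      using cy(1) by (auto simp: card_2_iff)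
    obtain \<sigma> :: "nat \<Rightarrow> nat" where "bij_betw \<sigma> {1..5} {1..5}" "map \<sigma> [a, b, c, e] = [1, 2, 3, 4]"
      using relabel[of "[a, b, c, e]" "[1, 2, 3, 4]"] 1 ab ce by auto
    then show ?thesis
      using that ab ce by auto
  next
    case 2
    obtain b where b: "b \<noteq> a" "x = {a, b}"
      using card_2_doubleton_memE[OF cx(1)] 2 by blast
    obtain c where c: "c \<noteq> a" "y = {a, c}"
      using card_2_doubleton_memE[OF cy(1)] 2 by blast
    obtain \<sigma> :: "nat \<Rightarrow> nat" where "bij_betw \<sigma> {1..5} {1..5}" "map \<sigma> [a, b, c] = [1, 2, 3]"
      using relabel[of "[a, b, c]" "[1, 2, 3]"] 2 b c by auto
    then show ?thesis
      using that b c by auto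
  next
    case 3
    obtain a b where ab: "x = {a, b}" "a \<noteq> b"
      using cx(1) by (auto simp: card_2_iff)
    obtain \<sigma> :: "nat \<Rightarrow> nat" where "bij_betw \<sigma> {1..5} {1..5}" "map \<sigma> [a, b] = [1, 2]"
      using relabel[of "[a, b]" "[1, 2]"] ab by auto
    then show ?thesis
      using that 3 ab by auto
  qed
qed

lemma coalition_search_petersen_vertex:
  "\<not> coalition_search petersen_adj 4 5 10 [[0]] [[0]] [1,2,3,4,5,6,7,8,9]"
  by code_simp

lemma coalition_search_petersen_non_edge:
  "\<not> coalition_search petersen_adj 4 5 10 [[0,1]] [[0,1]] [2,3,4,5,6,7,8,9]"
  by code_simp

lemma coalition_search_petersen_edge:
  "\<not> coalition_search petersen_adj 4 5 10 [[0,7]] [[0,7]] [1,2,3,4,5,6,8,9]"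
  by code_simp

lemma petersen_num_fc_partition_card_le:
  assumes fc: "fc_partition petersen_num_V petersen_num_E Q"
    and R: "R \<in> Q" "R \<in> {{0}, {0,1}, {0,7}}"
  shows "card Q \<le> 4"
proof (rule ccontr)
  assume "\<not> card Q \<le> 4"
  then have card: "5 \<le> card Q"
    by simp
  have part: "partition_on petersen_num_V Q"
    using fc by (simp add: fc_partition_def)
  have parts: "\<not> fair_dominating_set petersen_num_V petersen_num_E A \<and>
      (\<exists>B\<in>Q. fair_dominating_set petersen_num_V petersen_num_E (A \<union> B))" if "A \<in> Q" for A
    using fc_partition_partner[OF fc that] petersen_fair_dominating_card by fastforce
  have search: "coalition_search petersen_adj 4 5 10 [r] [r] F"
    if "set r = R" "set F = petersen_num_V - R" for r F
    using coalition_search_sound[OF distinct_petersen_adj petersen_fair_dominating_card part card parts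
        search_inv_init[OF distinct_petersen_adj petersen_fair_dominating_card part card parts]]
      that R(1) by blast
  consider "R = {0}" | "R = {0,1}" | "R = {0,7}"
    using R(2) by blast
  then show False
  proof cases
    case 1
    then show False
      using search[of "[0]" "[1,2,3,4,5,6,7,8,9]"] coalition_search_petersen_vertex
      by (simp add: petersen_num_V_eq insert_Diff_if)
  next
    case 2
    then show False
      using search[of "[0,1]" "[2,3,4,5,6,7,8,9]"] coalition_search_petersen_non_edge
      by (simp add: petersen_num_V_eq insert_Diff_if)
  next
    case 3
    then show False
      using search[of "[0,7]" "[1,2,3,4,5,6,8,9]"] coalition_search_petersen_edge
      by (simp add: petersen_num_V_eq insert_Diff_if)
  qed
qed

lemma petersen_small_part:
  assumes part: "partition_on petersen_V Q" and card: "5 \<le> card Q"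
  obtains x y where "{x, y} \<in> Q" "x \<in> petersen_V" "y \<in> petersen_V"
proof -
  have "Q \<noteq> {}"
    using card by auto
  then obtain X where X: "X \<in> Q" "card X * card Q \<le> 10"
    using partition_on_small_part[OF finite_petersen_V part] unfolding card_petersen_V by blast
  have XV: "X \<subseteq> petersen_V"
    using X(1) partition_onD1[OF part] by blast
  have "card X * 5 \<le> 10"
    using X(2) mult_le_mono2[OF card, of "card X"] by linarith
  then have "card X \<le> 2"
    by linarith
  moreover have "X \<noteq> {}" "finite X"
    using X(1) partition_onD3[OF part] finite_subset[OF XV finite_petersen_V] by auto
  ultimately obtain x y where "X = {x, y}"
    using card_le_2_doubletonE by blast
  then show ?thesis
    using that X(1) XV by blast
qed

lemma petersen_relabel_pair:
  assumes xy: "x \<in> petersen_V" "y \<in> petersen_V"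
  obtains h where "graph_iso petersen_V petersen_E petersen_num_V petersen_num_E h"
    "h ` {x, y} \<in> {{0}, {0,1}, {0,7}}"
proof -
  obtain \<sigma> :: "nat \<Rightarrow> nat"
    where \<sigma>: "bij_betw \<sigma> {1..5} {1..5}" "\<sigma> ` x = {1,2}" "\<sigma> ` y \<in> {{1,2}, {1,3}, {3,4}}"
    by (rule petersen_canonical_pair[OF xy])
  let ?g = "inv_into petersen_num_V ((!) petersen_labels)"
  have label: "?g (petersen_labels ! i) = i" if "i \<in> petersen_num_V" for i
    using graph_iso_petersen_labels bij_betw_inv_into_left that by (metis graph_iso_def)
  have "?g {1,2} = 0" "?g {1,3} = 1" "?g {3,4} = 7"
    using label[of 0] label[of 1] label[of 7] by (simp_all add: petersen_num_V_eq petersen_labels_def)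
  then have "(?g \<circ> (`) \<sigma>) ` {x, y} \<in> {{0}, {0,1}, {0,7}}"
    using \<sigma>(2,3) by auto
  then show ?thesis
    using that graph_iso_comp[OF petersen_automorphism[OF \<sigma>(1)] graph_iso_inv[OF graph_iso_petersen_labels]]
    by blast
qed

lemma petersen_fc_partition_card_le:
  assumes fc: "fc_partition petersen_V petersen_E Q"
  shows "card Q \<le> 4"
proof (rule ccontr)
  assume "\<not> card Q \<le> 4"
  then have card: "5 \<le> card Q"
    by simp
  have part: "partition_on petersen_V Q"
    using fc by (simp add: fc_partition_def)
  obtain x y where xy: "{x, y} \<in> Q" "x \<in> petersen_V" "y \<in> petersen_V"
    by (rule petersen_small_part[OF part card])
  obtain h where h: "graph_iso petersen_V petersen_E petersen_num_V petersen_num_E h"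
    "h ` {x, y} \<in> {{0}, {0,1}, {0,7}}"
    by (rule petersen_relabel_pair[OF xy(2,3)])
  have "card ((`) h ` Q) \<le> 4"
    using petersen_num_fc_partition_card_le[OF graph_iso_fc_partition(1)[OF h(1) fc] _ h(2)] xy(1) by blast
  then show False
    using graph_iso_fc_partition(2)[OF h(1) fc] card by simp
qed

theorem theorem3p3:
  shows "fair_coalition_number petersen_V petersen_E = 4"
proof -
  let ?Q = "{{0}, {1}, {2,4,6,9}, {3,5,7,8}} :: nat set set"
  have "(2::nat) \<in> {2,4,6,9}" "(2::nat) \<notin> {3,5,7,8}"
    by simp_all
  then have "{2,4,6,9} \<noteq> ({3,5,7,8} :: nat set)"
    by blast
  then have "card ?Q = 4"
    by simp
  then show ?thesis
    using fair_coalition_number_eqI[OF petersen_fc_partition_card_le]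
      graph_iso_fc_partition[OF graph_iso_petersen_labels petersen_num_fc_partition] by metis
qed

end
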